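(* Let $a\ge7$ be an odd integer and $M_a=(4,6,a,a+2)$. Then $$I_{M_a}=\mathrm{rad}\big(x_1^{(a+1)/2}-x_3x_4,\;x_1^3-x_2^2,\;x_3^{a+2}-x_4^{a},\;x_1x_4-x_2x_3\big)$$ in $K[x_1,x_2,x_3,x_4]$, for any field $K$.
   Context: For a $1\times n$ integer row matrix $M=(a_1,\dots,a_n)$ (positive entries), the toric ideal $I_M\subseteq K[x_1,\dots,x_n]$ is the kernel of $K[x_1,\dots,x_n]\to K[t]$, $x_i\mapsto t^{a_i}$. *)

theory Defs
  imports "HOL-Library.Poly_Mapping" "HOL-Computational_Algebra.Polynomial"
begin

text \<open>Multivariate polynomials over K in variables x_i (i :: nat), represented as
  finitely supported maps from monomials (exponent vectors, finitely supported nat to nat maps) to coefficients.\<close>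

type_synonym 'k mpoly = "(nat \<Rightarrow>\<^sub>0 nat) \<Rightarrow>\<^sub>0 'k"

definition Var :: "nat \<Rightarrow> 'k::comm_ring_1 mpoly" where
  "Var i = Poly_Mapping.single (Poly_Mapping.single i 1) 1"

definition polyring :: "nat \<Rightarrow> 'k::comm_ring_1 mpoly set" where
  "polyring n = {p. \<forall>m\<in>Poly_Mapping.keys p. Poly_Mapping.keys m \<subseteq> {1..n}}"

definition toric_map :: "(nat \<Rightarrow> nat) \<Rightarrow> 'k::comm_ring_1 mpoly \<Rightarrow> 'k poly" where
  "toric_map a p = (\<Sum>m\<in>Poly_Mapping.keys p. Polynomial.monom (Poly_Mapping.lookup p m) (\<Sum>i\<in>Poly_Mapping.keys m. a i * Poly_Mapping.lookup m i))"

definition toric_ideal :: "nat \<Rightarrow> (nat \<Rightarrow> nat) \<Rightarrow> 'k::comm_ring_1 mpoly set" where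
  "toric_ideal n a = {p \<in> polyring n. toric_map a p = 0}"

definition gen_ideal :: "nat \<Rightarrow> 'k::comm_ring_1 mpoly set \<Rightarrow> 'k mpoly set" where
  "gen_ideal n G = {p. \<exists>c. (\<forall>g\<in>G. c g \<in> polyring n) \<and> p = (\<Sum>g\<in>G. c g * g)}"

definition radical :: "nat \<Rightarrow> 'k::comm_ring_1 mpoly set \<Rightarrow> 'k mpoly set" where
  "radical n I = {p \<in> polyring n. \<exists>k. p ^ k \<in> I}"

end

theory Submission
  imports Defs
begin

text \<open>Write a = 2d + 5 and grade K[x1..x4] by deg x_i = a_i. The generators are homogeneous
  binomials, so they lie in the kernel of x_i \<mapsto> t^(a_i), and so does their radical because
  K[t] is a domain.

  Conversely, the radical R of the ideal J contains six binomials: x2^2 - x1^3, x3 x4 - x1^(d+3)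
  and x2 x3 - x1 x4 (generators up to sign), x2 x4 - x1^2 x3 (its square lies in J), and
  m = x3^2 - x1^(d+1) x2, m' = x4^2 - x1^(d+2) x2. For m one checks m (m - x3^2) \<in> J and
  x3^(2(a+2)) m \<in> J; then m^(k+1) \<equiv> x3^(2k) m modulo J makes m nilpotent modulo J, and
  likewise m' with x4. Rewriting with these six binomials keeps the degree and lowers the total
  exponent of x2, x3, x4 until it is at most 1, so modulo R every monomial is one of x1^i,
  x1^i x2, x1^i x3, x1^i x4. As a is odd, these have distinct degrees mod 4, so this normal form
  depends only on the degree. A kernel element has coefficient sum zero in each degree, hence
  it is congruent to zero modulo R.\<close>

section \<open>Weighted degree and the toric map\<close>

definition wdeg :: "(nat \<Rightarrow> nat) \<Rightarrow> (nat \<Rightarrow>\<^sub>0 nat) \<Rightarrow> nat" where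
  "wdeg w m = (\<Sum>i\<in>Poly_Mapping.keys m. w i * Poly_Mapping.lookup m i)"

lemma wdeg_add: "wdeg w (m + n) = wdeg w m + wdeg w n"
  unfolding wdeg_def by (rule setsum_keys_plus_distrib) (simp_all add: algebra_simps)

lemma wdeg_single [simp]: "wdeg w (Poly_Mapping.single i k) = w i * k"
  by (simp add: wdeg_def)

lemma toric_map_eq_sum_wdeg:
  "toric_map w p =
     (\<Sum>m\<in>Poly_Mapping.keys p. Polynomial.monom (Poly_Mapping.lookup p m) (wdeg w m))"
  by (simp add: toric_map_def wdeg_def)

lemma toric_map_add: "toric_map w (p + q) = toric_map w p + toric_map w q"
  unfolding toric_map_eq_sum_wdeg by (rule setsum_keys_plus_distrib) (simp_all add: add_monom)

lemma toric_map_zero [simp]: "toric_map w 0 = 0"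
  by (simp add: toric_map_def)

lemma toric_map_sum: "toric_map w (sum f S) = (\<Sum>x\<in>S. toric_map w (f x))"
  by (induction S rule: infinite_finite_induct) (simp_all add: toric_map_add)

lemma toric_map_single [simp]:
  "toric_map w (Poly_Mapping.single m c) = Polynomial.monom c (wdeg w m)"
  by (simp add: toric_map_eq_sum_wdeg)

lemma sum_single_lookup:
  "(\<Sum>m\<in>Poly_Mapping.keys p. Poly_Mapping.single m (Poly_Mapping.lookup p m)) = p"
  by (rule poly_mapping_eqI) (simp add: lookup_sum lookup_single when_def in_keys_iff)

lemma toric_map_mult: "toric_map w (p * q) = toric_map w p * toric_map w q"
proof -
  let ?single = "\<lambda>p m. Poly_Mapping.single m (Poly_Mapping.lookup p m)"
  have "p * q =
      (\<Sum>m\<in>Poly_Mapping.keys p. ?single p m) * (\<Sum>n\<in>Poly_Mapping.keys q. ?single q n)"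
    by (simp only: sum_single_lookup)
  then have "toric_map w (p * q) =
      (\<Sum>m\<in>Poly_Mapping.keys p. \<Sum>n\<in>Poly_Mapping.keys q.
         toric_map w (?single p m * ?single q n))"
    by (simp only: sum_product toric_map_sum)
  also have "\<dots> = toric_map w p * toric_map w q"
    unfolding toric_map_eq_sum_wdeg[of w p] toric_map_eq_sum_wdeg[of w q]
    by (simp add: mult_single wdeg_add mult_monom sum_product)
  finally show ?thesis .
qed

lemma toric_map_one [simp]: "toric_map w 1 = 1"
  using toric_map_single[of w 0 1] by (simp add: wdeg_def monom_0 one_pCons)

lemma toric_map_power: "toric_map w (p ^ k) = toric_map w p ^ k"
  by (induction k) (simp_all add: toric_map_mult)

lemma toric_map_diff: "toric_map w (p - q) = toric_map w p - toric_map w q"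
  using toric_map_add[of w "p - q" q] by (simp add: algebra_simps)

lemma toric_map_Var: "toric_map w (Var i) = Polynomial.monom 1 (w i)"
  by (simp add: Var_def)

lemma Var_power: "Var i ^ k = Poly_Mapping.single (Poly_Mapping.single i k) 1"
  by (induction k) (simp_all add: Var_def mult_single single_add[symmetric] add.commute)

lemma single_sum: "Poly_Mapping.single k (sum f S) = (\<Sum>x\<in>S. Poly_Mapping.single k (f x))"
  by (induction S rule: infinite_finite_induct) (simp_all add: single_add)

lemma toric_kernel_sum_eq_zero:
  fixes f :: "nat \<Rightarrow> 'k::comm_ring_1 mpoly"
  assumes "toric_map w p = 0"
  shows "(\<Sum>m\<in>Poly_Mapping.keys p.
           Poly_Mapping.single 0 (Poly_Mapping.lookup p m) * f (wdeg w m)) = 0"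
proof -
  let ?K = "Poly_Mapping.keys p"
  have coeff: "(\<Sum>m\<in>{m\<in>?K. wdeg w m = D}. Poly_Mapping.lookup p m) = 0" for D
  proof -
    have "(\<Sum>m\<in>{m\<in>?K. wdeg w m = D}. Poly_Mapping.lookup p m) =
        Polynomial.coeff (toric_map w p) D"
      by (simp add: toric_map_eq_sum_wdeg coeff_sum sum.inter_filter)
    with assms show ?thesis
      by simp
  qed
  have "(\<Sum>m\<in>?K. Poly_Mapping.single 0 (Poly_Mapping.lookup p m) * f (wdeg w m)) =
      (\<Sum>D\<in>wdeg w ` ?K. \<Sum>m\<in>{m\<in>?K. wdeg w m = D}.
         Poly_Mapping.single 0 (Poly_Mapping.lookup p m) * f D)"
    by (subst sum.image_gen[of ?K _ "wdeg w"]) (auto intro!: sum.cong)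
  also have "\<dots> = 0"
    by (simp add: coeff flip: sum_distrib_right single_sum)
  finally show ?thesis .
qed

section \<open>Generated ideals and their radicals\<close>

lemma polyring_add [simp]: "p \<in> polyring n \<Longrightarrow> q \<in> polyring n \<Longrightarrow> p + q \<in> polyring n"
  unfolding polyring_def by (auto dest!: keys_add[THEN subsetD])

lemma polyring_uminus [simp]: "p \<in> polyring n \<Longrightarrow> - p \<in> polyring n"
  unfolding polyring_def by simp

lemma polyring_diff [simp]: "p \<in> polyring n \<Longrightarrow> q \<in> polyring n \<Longrightarrow> p - q \<in> polyring n"
  using polyring_add[of p n "- q"] by simp

lemma polyring_mult [simp]: "p \<in> polyring n \<Longrightarrow> q \<in> polyring n \<Longrightarrow> p * q \<in> polyring n"
  unfolding polyring_def by (fastforce dest!: keys_mult[THEN subsetD] keys_add[THEN subsetD])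

lemma polyring_single: "Poly_Mapping.keys m \<subseteq> {1..n} \<Longrightarrow> Poly_Mapping.single m c \<in> polyring n"
  by (simp add: polyring_def)

lemma polyring_zero [simp]: "0 \<in> polyring n"
  by (simp add: polyring_def)

lemma polyring_one [simp]: "1 \<in> polyring n"
  using polyring_single[of 0 n 1] by simp

lemma polyring_power [simp]: "p \<in> polyring n \<Longrightarrow> p ^ k \<in> polyring n"
  by (induction k) simp_all

lemma polyring_of_nat [simp]: "of_nat k \<in> polyring n"
  using polyring_single[of 0 n "of_nat k"] by simp

lemma polyring_sum: "(\<And>x. x \<in> S \<Longrightarrow> f x \<in> polyring n) \<Longrightarrow> sum f S \<in> polyring n"
  by (induction S rule: infinite_finite_induct) simp_all

lemma Var_in_polyring [simp]: "1 \<le> i \<Longrightarrow> i \<le> n \<Longrightarrow> Var i \<in> polyring n"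
  unfolding Var_def by (rule polyring_single) simp

lemma gen_ideal_zero: "0 \<in> gen_ideal n G"
  unfolding gen_ideal_def by (auto intro!: exI[of _ "\<lambda>_. 0"])

lemma gen_ideal_add:
  assumes "p \<in> gen_ideal n G" "q \<in> gen_ideal n G"
  shows "p + q \<in> gen_ideal n G"
proof -
  obtain c d where "\<forall>g\<in>G. c g \<in> polyring n" "p = (\<Sum>g\<in>G. c g * g)"
    and "\<forall>g\<in>G. d g \<in> polyring n" "q = (\<Sum>g\<in>G. d g * g)"
    using assms unfolding gen_ideal_def by blast
  then show ?thesis
    unfolding gen_ideal_def by (auto intro!: exI[of _ "\<lambda>g. c g + d g"] simp: sum.distrib distrib_right)
qed

lemma gen_ideal_mult:
  assumes "r \<in> polyring n" "p \<in> gen_ideal n G"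
  shows "r * p \<in> gen_ideal n G"
proof -
  obtain c where "\<forall>g\<in>G. c g \<in> polyring n" "p = (\<Sum>g\<in>G. c g * g)"
    using assms(2) unfolding gen_ideal_def by blast
  with assms(1) show ?thesis
    unfolding gen_ideal_def by (auto intro!: exI[of _ "\<lambda>g. r * c g"] simp: sum_distrib_left mult.assoc)
qed

lemma gen_ideal_uminus: "p \<in> gen_ideal n G \<Longrightarrow> - p \<in> gen_ideal n G"
  using gen_ideal_mult[of "- 1" n p G] by simp

lemma gen_ideal_diff: "p \<in> gen_ideal n G \<Longrightarrow> q \<in> gen_ideal n G \<Longrightarrow> p - q \<in> gen_ideal n G"
  using gen_ideal_add[of p n G "- q"] by (simp add: gen_ideal_uminus)

lemma gen_ideal_sum: "(\<And>x. x \<in> S \<Longrightarrow> f x \<in> gen_ideal n G) \<Longrightarrow> sum f S \<in> gen_ideal n G"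
  by (induction S rule: infinite_finite_induct) (simp_all add: gen_ideal_zero gen_ideal_add)

lemma generator_in_gen_ideal:
  assumes "finite G" "g \<in> G"
  shows "g \<in> gen_ideal n G"
proof -
  have "(\<Sum>h\<in>G. (if h = g then 1 else 0) * h) = (\<Sum>h\<in>G. if h = g then h else 0)"
    by (rule sum.cong) simp_all
  with assms have "g = (\<Sum>h\<in>G. (if h = g then 1 else 0) * h)"
    by simp
  then show ?thesis
    unfolding gen_ideal_def by (auto intro!: exI[of _ "\<lambda>h. if h = g then 1 else 0"])
qed

lemma gen_ideal_subset_polyring: "G \<subseteq> polyring n \<Longrightarrow> gen_ideal n G \<subseteq> polyring n"
  unfolding gen_ideal_def by (auto intro!: polyring_sum)

lemma radicalI: "p \<in> polyring n \<Longrightarrow> p ^ k \<in> I \<Longrightarrow> p \<in> radical n I"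
  unfolding radical_def by blast

lemma gen_ideal_subset_radical:
  "G \<subseteq> polyring n \<Longrightarrow> p \<in> gen_ideal n G \<Longrightarrow> p \<in> radical n (gen_ideal n G)"
  using gen_ideal_subset_polyring[of G n] by (intro radicalI[of _ _ 1]) auto

lemma radical_mult:
  "r \<in> polyring n \<Longrightarrow> p \<in> radical n (gen_ideal n G) \<Longrightarrow> r * p \<in> radical n (gen_ideal n G)"
  unfolding radical_def by (auto simp: power_mult_distrib intro!: gen_ideal_mult)

lemma radical_add:
  assumes "p \<in> radical n (gen_ideal n G)" "q \<in> radical n (gen_ideal n G)"
  shows "p + q \<in> radical n (gen_ideal n G)"
proof -
  from assms obtain k l where p: "p \<in> polyring n" "p ^ k \<in> gen_ideal n G"
    and q: "q \<in> polyring n" "q ^ l \<in> gen_ideal n G"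
    unfolding radical_def by auto
  have "of_nat ((k + l) choose i) * p ^ i * q ^ (k + l - i) \<in> gen_ideal n G" for i
  proof (cases "k \<le> i")
    case True
    then obtain j where "i = k + j"
      using le_Suc_ex by blast
    then have "of_nat ((k + l) choose i) * p ^ i * q ^ (k + l - i) =
        (of_nat ((k + l) choose i) * p ^ j * q ^ (k + l - i)) * p ^ k"
      by (simp add: power_add mult_ac)
    with p q show ?thesis
      by (simp add: gen_ideal_mult)
  next
    case False
    then have "k + l - i = (k - i) + l"
      by simp
    then have "of_nat ((k + l) choose i) * p ^ i * q ^ (k + l - i) =
        (of_nat ((k + l) choose i) * p ^ i * q ^ (k - i)) * q ^ l"
      by (simp add: power_add mult_ac)
    with p q show ?thesis
      by (simp add: gen_ideal_mult)
  qed
  then have "(p + q) ^ (k + l) \<in> gen_ideal n G"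
    by (simp add: binomial_ring gen_ideal_sum)
  with p q show ?thesis
    by (auto intro: radicalI)
qed

lemma radical_zero: "0 \<in> radical n (gen_ideal n G)"
  by (rule radicalI[of _ _ 1]) (simp_all add: gen_ideal_zero)

lemma radical_uminus: "p \<in> radical n (gen_ideal n G) \<Longrightarrow> - p \<in> radical n (gen_ideal n G)"
  using radical_mult[of "- 1" n p G] by simp

lemma radical_sum:
  "(\<And>x. x \<in> S \<Longrightarrow> f x \<in> radical n (gen_ideal n G)) \<Longrightarrow> sum f S \<in> radical n (gen_ideal n G)"
  by (induction S rule: infinite_finite_induct) (simp_all add: radical_zero radical_add)

lemma radical_gen_ideal_subset_toric_ideal:
  fixes G :: "'k::idom mpoly set"
  assumes "G \<subseteq> toric_ideal n w"
  shows "radical n (gen_ideal n G) \<subseteq> toric_ideal n w"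
proof
  fix p assume "p \<in> radical n (gen_ideal n G)"
  then obtain k c where p: "p \<in> polyring n" and c: "p ^ k = (\<Sum>g\<in>G. c g * g)"
    by (auto simp: radical_def gen_ideal_def)
  have "toric_map w p ^ k = (\<Sum>g\<in>G. toric_map w (c g) * toric_map w g)"
    by (simp add: c toric_map_sum toric_map_mult flip: toric_map_power)
  also have "\<dots> = 0"
    using assms by (simp add: toric_ideal_def subset_iff)
  finally show "p \<in> toric_ideal n w"
    using p by (simp add: toric_ideal_def)
qed

lemma in_radical_if_square_eq_mult:
  assumes m: "m \<in> polyring n" and y: "y \<in> polyring n"
    and square: "m * (m - y) \<in> gen_ideal n G" and annihilated: "y ^ e * m \<in> gen_ideal n G"
  shows "m \<in> radical n (gen_ideal n G)"
proof -
  have power: "m ^ (k + 1) - y ^ k * m \<in> gen_ideal n G" for k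
  proof (induction k)
    case 0
    then show ?case by (simp add: gen_ideal_zero)
  next
    case (Suc k)
    have "m ^ (Suc k + 1) - y ^ Suc k * m = m * (m ^ (k + 1) - y ^ k * m) + y ^ k * (m * (m - y))"
      by (simp add: algebra_simps)
    with Suc m y square show ?case
      by (simp add: gen_ideal_add gen_ideal_mult)
  qed
  have "m ^ (e + 1) = (m ^ (e + 1) - y ^ e * m) + y ^ e * m"
    by simp
  with power annihilated have "m ^ (e + 1) \<in> gen_ideal n G"
    by (metis gen_ideal_add)
  with m show ?thesis
    by (rule radicalI)
qed

definition mon :: "nat \<Rightarrow> nat \<Rightarrow> nat \<Rightarrow> nat \<Rightarrow> 'k::comm_ring_1 mpoly" where
  "mon i j k l = Var 1 ^ i * Var 2 ^ j * Var 3 ^ k * Var 4 ^ l"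

lemma mon_in_polyring [simp]: "mon i j k l \<in> polyring 4"
  by (simp add: mon_def)

lemma mon_mult: "mon i j k l * mon i' j' k' l' = mon (i + i') (j + j') (k + k') (l + l')"
  by (simp add: mon_def power_add mult_ac)

lemma radical_mon_shift:
  assumes "mon i j k l - mon i' j' k' l' \<in> radical 4 (gen_ideal 4 G)"
  shows "mon (i + p) (j + q) (k + r) (l + s) - mon (i' + p) (j' + q) (k' + r) (l' + s)
    \<in> radical 4 (gen_ideal 4 G)"
proof -
  have "mon (i + p) (j + q) (k + r) (l + s) - mon (i' + p) (j' + q) (k' + r) (l' + s) =
      mon p q r s * (mon i j k l - mon i' j' k' l')"
    by (simp add: right_diff_distrib mon_mult add.commute)
  with assms show ?thesis
    by (metis radical_mult mon_in_polyring)
qed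

abbreviation weights :: "nat \<Rightarrow> nat \<Rightarrow> nat" where
  "weights a \<equiv> (\<lambda>i. if i = 1 then 4 else if i = 2 then 6 else if i = 3 then a else a + 2)"

definition mon_deg :: "nat \<Rightarrow> nat \<Rightarrow> nat \<Rightarrow> nat \<Rightarrow> nat \<Rightarrow> nat" where
  "mon_deg a i j k l = 4 * i + 6 * j + a * k + (a + 2) * l"

lemma exponent_decomposition:
  fixes m :: "nat \<Rightarrow>\<^sub>0 nat"
  assumes "Poly_Mapping.keys m \<subseteq> {1..4}"
  shows "m = Poly_Mapping.single 1 (Poly_Mapping.lookup m 1)
    + Poly_Mapping.single 2 (Poly_Mapping.lookup m 2)
    + Poly_Mapping.single 3 (Poly_Mapping.lookup m 3)
    + Poly_Mapping.single 4 (Poly_Mapping.lookup m 4)"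
proof (rule poly_mapping_eqI)
  fix i :: nat
  have "Poly_Mapping.keys m \<subseteq> {1, 2, 3, 4}"
    using assms by auto
  then have "i \<in> {1, 2, 3, 4} \<or> Poly_Mapping.lookup m i = 0"
    by (meson in_keys_iff subsetD)
  then show "Poly_Mapping.lookup m i = Poly_Mapping.lookup (Poly_Mapping.single 1 (Poly_Mapping.lookup m 1)
      + Poly_Mapping.single 2 (Poly_Mapping.lookup m 2)
      + Poly_Mapping.single 3 (Poly_Mapping.lookup m 3)
      + Poly_Mapping.single 4 (Poly_Mapping.lookup m 4)) i"
    by (auto simp: lookup_add lookup_single when_def)
qed

lemma single_eq_mon:
  assumes "Poly_Mapping.keys m \<subseteq> {1..4}"
  shows "Poly_Mapping.single m 1 =
    mon (Poly_Mapping.lookup m 1) (Poly_Mapping.lookup m 2)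
      (Poly_Mapping.lookup m 3) (Poly_Mapping.lookup m 4)"
  by (subst exponent_decomposition[OF assms]) (simp only: mon_def Var_power mult_single mult_1)

lemma wdeg_weights:
  assumes "Poly_Mapping.keys m \<subseteq> {1..4}"
  shows "wdeg (weights a) m =
    mon_deg a (Poly_Mapping.lookup m 1) (Poly_Mapping.lookup m 2)
      (Poly_Mapping.lookup m 3) (Poly_Mapping.lookup m 4)"
  by (subst exponent_decomposition[OF assms]) (simp add: wdeg_add mon_deg_def)

definition normal_mon :: "nat \<Rightarrow> nat \<Rightarrow> 'k::comm_ring_1 mpoly" where
  "normal_mon a D =
     (if D mod 4 = 0 then mon (D div 4) 0 0 0
      else if D mod 4 = 2 then mon ((D - 6) div 4) 1 0 0
      else if D mod 4 = a mod 4 then mon ((D - a) div 4) 0 1 0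
      else mon ((D - (a + 2)) div 4) 0 0 1)"

lemma mon_eq_normal_mon:
  assumes "odd a" "j + k + l \<le> 1"
  shows "mon i j k l = normal_mon a (mon_deg a i j k l)"
proof -
  consider "j = 0" "k = 0" "l = 0" | "j = 1" "k = 0" "l = 0" | "j = 0" "k = 1" "l = 0"
    | "j = 0" "k = 0" "l = 1"
    using assms(2) by linarith
  then show ?thesis
  proof cases
    case 3
    have "(4 * i + a) mod 4 = a mod 4" "a mod 4 \<noteq> 0" "a mod 4 \<noteq> 2"
      using assms(1) by presburger+
    with 3 show ?thesis
      by (simp add: normal_mon_def mon_deg_def)
  next
    case 4
    have "(4 * i + (a + 2)) mod 4 = (a + 2) mod 4" "(a + 2) mod 4 \<noteq> 0" "(a + 2) mod 4 \<noteq> 2"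
      "(a + 2) mod 4 \<noteq> a mod 4"
      using assms(1) by presburger+
    with 4 show ?thesis
      by (simp add: normal_mon_def mon_deg_def)
  qed (simp_all add: normal_mon_def mon_deg_def)
qed

section \<open>Reduction to normal form modulo the radical\<close>

abbreviation generators :: "nat \<Rightarrow> 'k::comm_ring_1 mpoly set" where
  "generators a \<equiv>
     {Var 1 ^ ((a + 1) div 2) - Var 3 * Var 4, Var 1 ^ 3 - Var 2 ^ 2,
      Var 3 ^ (a + 2) - Var 4 ^ a, Var 1 * Var 4 - Var 2 * Var 3}"

context
  fixes a d :: nat
  assumes a_eq: "a = 2 * d + 5"
begin

(* x1^((a+1)/2) is written x1^d * x1^3 so that the ring identities below can treat x1^d as an atom. *)
lemma generators_in_gen_ideal:
  shows "Var 1 ^ d * Var 1 ^ 3 - Var 3 * Var 4 \<in> gen_ideal 4 (generators a)"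
    and "Var 1 ^ 3 - Var 2 ^ 2 \<in> gen_ideal 4 (generators a)"
    and "Var 3 ^ (a + 2) - Var 4 ^ a \<in> gen_ideal 4 (generators a)"
    and "Var 1 * Var 4 - Var 2 * Var 3 \<in> gen_ideal 4 (generators a)"
proof -
  have half: "Var 1 ^ d * Var 1 ^ 3 = Var 1 ^ ((a + 1) div 2)"
    using a_eq by (simp add: add.commute flip: power_add)
  show "Var 1 ^ d * Var 1 ^ 3 - Var 3 * Var 4 \<in> gen_ideal 4 (generators a)"
    unfolding half by (intro generator_in_gen_ideal) simp_all
qed (intro generator_in_gen_ideal; simp)+

lemma x3_square_binomial_in_radical:
  "(Var 3 ^ 2 - Var 1 ^ d * Var 1 * Var 2 :: 'k::comm_ring_1 mpoly)
    \<in> radical 4 (gen_ideal 4 (generators a))" (is "?m \<in> radical 4 ?J")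
proof (rule in_radical_if_square_eq_mult[where y = "Var 3 ^ 2" and e = "a + 2"])
  note g = generators_in_gen_ideal
  have "Var 2 * ?m = Var 1 ^ d * Var 1 * (Var 1 ^ 3 - Var 2 ^ 2)
      - Var 1 * (Var 1 ^ d * Var 1 ^ 3 - Var 3 * Var 4) - Var 3 * (Var 1 * Var 4 - Var 2 * Var 3)"
    by (simp add: algebra_simps power2_eq_square power3_eq_cube)
  also have "\<dots> \<in> ?J"
    by (intro g gen_ideal_diff gen_ideal_mult) simp_all
  finally have x2: "Var 2 * ?m \<in> ?J" .
  have "Var 4 * ?m = Var 1 ^ d * Var 3 * (Var 1 ^ 3 - Var 2 ^ 2)
      - Var 1 ^ d * Var 2 * (Var 1 * Var 4 - Var 2 * Var 3)
      - Var 3 * (Var 1 ^ d * Var 1 ^ 3 - Var 3 * Var 4)"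
    by (simp add: algebra_simps power2_eq_square power3_eq_cube)
  also have "\<dots> \<in> ?J"
    by (intro g gen_ideal_diff gen_ideal_mult) simp_all
  finally have x4: "Var 4 * ?m \<in> ?J" .
  have "?m * (?m - Var 3 ^ 2) = - (Var 1 ^ d * Var 1) * (Var 2 * ?m)"
    by (simp add: algebra_simps)
  also have "\<dots> \<in> ?J"
    by (intro x2 gen_ideal_mult) simp
  finally show "?m * (?m - Var 3 ^ 2) \<in> ?J" .
  \<comment> \<open>Proved for variables: the simplifier would otherwise unfold the powers x3^(a+2).\<close>
  have cancel: "X * X * m = X * (Y * (z * m) + m * (X - Y * z))" for X Y z m :: "'k mpoly"
    by (simp add: algebra_simps)
  have "a = Suc (2 * d + 4)"
    using a_eq by simp
  then have x4_power: "Var 4 ^ a = Var 4 ^ (2 * d + 4) * Var 4"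
    by (simp only: power_Suc2)
  have x3_power: "(Var 3 ^ 2) ^ (a + 2) = Var 3 ^ (a + 2) * Var 3 ^ (a + 2)"
    by (simp only: mult_2 power_add[of _ "a + 2" "a + 2"] flip: power_mult)
  have "(Var 3 ^ 2) ^ (a + 2) * ?m =
      Var 3 ^ (a + 2) * (Var 4 ^ (2 * d + 4) * (Var 4 * ?m) + ?m * (Var 3 ^ (a + 2) - Var 4 ^ a))"
    unfolding x3_power x4_power by (rule cancel)
  also have "\<dots> \<in> ?J"
    by (intro x4 g gen_ideal_add gen_ideal_mult) simp_all
  finally show "(Var 3 ^ 2) ^ (a + 2) * ?m \<in> ?J" .
qed simp_all

lemma x4_square_binomial_in_radical:
  "(Var 4 ^ 2 - Var 1 ^ d * Var 1 ^ 2 * Var 2 :: 'k::comm_ring_1 mpoly)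
    \<in> radical 4 (gen_ideal 4 (generators a))" (is "?m \<in> radical 4 ?J")
proof (rule in_radical_if_square_eq_mult[where y = "Var 4 ^ 2" and e = a])
  note g = generators_in_gen_ideal
  have "Var 1 * ?m = Var 4 * (Var 1 * Var 4 - Var 2 * Var 3)
      - Var 2 * (Var 1 ^ d * Var 1 ^ 3 - Var 3 * Var 4)"
    by (simp add: algebra_simps power2_eq_square power3_eq_cube)
  also have "\<dots> \<in> ?J"
    by (intro g gen_ideal_diff gen_ideal_mult) simp_all
  finally have x1: "Var 1 * ?m \<in> ?J" .
  have "Var 3 * ?m = Var 1 ^ d * Var 1 ^ 2 * (Var 1 * Var 4 - Var 2 * Var 3)
      - Var 4 * (Var 1 ^ d * Var 1 ^ 3 - Var 3 * Var 4)"
    by (simp add: algebra_simps power2_eq_square power3_eq_cube)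
  also have "\<dots> \<in> ?J"
    by (intro g gen_ideal_diff gen_ideal_mult) simp_all
  finally have x3: "Var 3 * ?m \<in> ?J" .
  have "?m * (?m - Var 4 ^ 2) = - (Var 1 ^ d * Var 1 * Var 2) * (Var 1 * ?m)"
    by (simp add: algebra_simps power2_eq_square)
  also have "\<dots> \<in> ?J"
    by (intro x1 gen_ideal_mult) simp
  finally show "?m * (?m - Var 4 ^ 2) \<in> ?J" .
  have cancel: "X * X * m = X * (Y * (z * m) - m * (Y * z - X))" for X Y z m :: "'k mpoly"
    by (simp add: algebra_simps)
  have x3_power: "Var 3 ^ (a + 2) = Var 3 ^ (a + 1) * Var 3"
    by (simp flip: power_Suc2)
  have x4_power: "(Var 4 ^ 2) ^ a = Var 4 ^ a * Var 4 ^ a"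
    by (simp only: mult_2 power_add[of _ a a] flip: power_mult)
  have "(Var 4 ^ 2) ^ a * ?m =
      Var 4 ^ a * (Var 3 ^ (a + 1) * (Var 3 * ?m) - ?m * (Var 3 ^ (a + 2) - Var 4 ^ a))"
    unfolding x3_power x4_power by (rule cancel)
  also have "\<dots> \<in> ?J"
    by (intro x3 g gen_ideal_diff gen_ideal_mult) simp_all
  finally show "(Var 4 ^ 2) ^ a * ?m \<in> ?J" .
qed simp_all

lemma generators_subset_polyring: "generators a \<subseteq> polyring 4"
  by simp

lemma mon_binomials_in_radical:
  shows "mon 0 2 0 0 - mon 3 0 0 0 \<in> radical 4 (gen_ideal 4 (generators a))"
    and "mon 0 0 2 0 - mon (d + 1) 1 0 0 \<in> radical 4 (gen_ideal 4 (generators a))"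
    and "mon 0 0 0 2 - mon (d + 2) 1 0 0 \<in> radical 4 (gen_ideal 4 (generators a))"
    and "mon 0 0 1 1 - mon (d + 3) 0 0 0 \<in> radical 4 (gen_ideal 4 (generators a))"
    and "mon 0 1 1 0 - mon 1 0 0 1 \<in> radical 4 (gen_ideal 4 (generators a))"
    and "mon 0 1 0 1 - mon 2 0 1 0 \<in> radical 4 (gen_ideal 4 (generators a))"
proof -
  note in_radical = gen_ideal_subset_radical[OF generators_subset_polyring]
  show "mon 0 2 0 0 - mon 3 0 0 0 \<in> radical 4 (gen_ideal 4 (generators a))"
    using radical_uminus[OF in_radical[OF generators_in_gen_ideal(2)]] by (simp add: mon_def)
  show "mon 0 0 2 0 - mon (d + 1) 1 0 0 \<in> radical 4 (gen_ideal 4 (generators a))"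
    using x3_square_binomial_in_radical by (simp add: mon_def mult_ac)
  show "mon 0 0 0 2 - mon (d + 2) 1 0 0 \<in> radical 4 (gen_ideal 4 (generators a))"
    using x4_square_binomial_in_radical by (simp add: mon_def power_add power2_eq_square mult_ac)
  show "mon 0 0 1 1 - mon (d + 3) 0 0 0 \<in> radical 4 (gen_ideal 4 (generators a))"
    using radical_uminus[OF in_radical[OF generators_in_gen_ideal(1)]] by (simp add: mon_def power_add)
  show "mon 0 1 1 0 - mon 1 0 0 1 \<in> radical 4 (gen_ideal 4 (generators a))"
    using radical_uminus[OF in_radical[OF generators_in_gen_ideal(4)]] by (simp add: mon_def)
  have "(Var 2 * Var 4 - Var 1 ^ 2 * Var 3) ^ 2 =
      (Var 1 * Var 3 ^ 2 - Var 4 ^ 2) * (Var 1 ^ 3 - Var 2 ^ 2)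
      + (Var 1 ^ 2 * Var 4 - Var 1 * Var 2 * Var 3) * (Var 1 * Var 4 - Var 2 * Var 3)"
    by (simp add: algebra_simps power2_eq_square power3_eq_cube)
  also have "\<dots> \<in> gen_ideal 4 (generators a)"
    by (intro generators_in_gen_ideal gen_ideal_add gen_ideal_mult) simp_all
  finally show "mon 0 1 0 1 - mon 2 0 1 0 \<in> radical 4 (gen_ideal 4 (generators a))"
    by (intro radicalI[where k = 2]) (simp_all add: mon_def)
qed

lemma mon_reduction_step:
  assumes "2 \<le> j + k + l"
  obtains i' j' k' l' where "mon i j k l - mon i' j' k' l' \<in> radical 4 (gen_ideal 4 (generators a))"
    and "j' + k' + l' < j + k + l" and "mon_deg a i' j' k' l' = mon_deg a i j k l"
proof -
  note shift = mon_binomials_in_radical[THEN radical_mon_shift]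
  have split_off: "\<exists>n'. n = c + n'" if "c \<le> n" for c n :: nat
    using that le_Suc_ex by blast
  consider "2 \<le> j" | "2 \<le> k" | "2 \<le> l"
    | "1 \<le> k" "1 \<le> l" | "1 \<le> j" "1 \<le> k" | "1 \<le> j" "1 \<le> l"
    using assms by linarith
  then show ?thesis
  proof cases
    case 1
    then obtain j0 where "j = 2 + j0" using split_off by blast
    with shift(1)[of i j0 k l] show ?thesis
      by (intro that[of "3 + i" j0 k l]) (simp_all add: mon_deg_def)
  next
    case 2
    then obtain k0 where "k = 2 + k0" using split_off by blast
    with shift(2)[of i j k0 l] show ?thesis
      by (intro that[of "d + 1 + i" "1 + j" k0 l]) (simp_all add: mon_deg_def a_eq algebra_simps)
  next
    case 3
    then obtain l0 where "l = 2 + l0" using split_off by blast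
    with shift(3)[of i j k l0] show ?thesis
      by (intro that[of "d + 2 + i" "1 + j" k l0]) (simp_all add: mon_deg_def a_eq algebra_simps)
  next
    case 4
    then obtain k0 l0 where "k = 1 + k0" "l = 1 + l0" using split_off by blast
    with shift(4)[of i j k0 l0] show ?thesis
      by (intro that[of "d + 3 + i" j k0 l0]) (simp_all add: mon_deg_def a_eq algebra_simps)
  next
    case 5
    then obtain j0 k0 where "j = 1 + j0" "k = 1 + k0" using split_off by blast
    with shift(5)[of i j0 k0 l] show ?thesis
      by (intro that[of "1 + i" j0 k0 "1 + l"]) (simp_all add: mon_deg_def a_eq algebra_simps)
  next
    case 6
    then obtain j0 l0 where "j = 1 + j0" "l = 1 + l0" using split_off by blast
    with shift(6)[of i j0 k l0] show ?thesis
      by (intro that[of "2 + i" j0 "1 + k" l0]) (simp_all add: mon_deg_def a_eq algebra_simps)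
  qed
qed

lemma mon_congruent_normal_mon:
  "(mon i j k l :: 'k::comm_ring_1 mpoly) - normal_mon a (mon_deg a i j k l)
    \<in> radical 4 (gen_ideal 4 (generators a))"
proof (induction "j + k + l" arbitrary: i j k l rule: less_induct)
  case less
  show ?case
  proof (cases "j + k + l \<le> 1")
    case True
    moreover have "odd a"
      using a_eq by simp
    ultimately show ?thesis
      by (simp add: mon_eq_normal_mon radical_zero)
  next
    case False
    then have "2 \<le> j + k + l"
      by simp
    then obtain i' j' k' l'
      where step: "(mon i j k l :: 'k mpoly) - mon i' j' k' l' \<in> radical 4 (gen_ideal 4 (generators a))"
      and smaller: "j' + k' + l' < j + k + l" and deg: "mon_deg a i' j' k' l' = mon_deg a i j k l"
      by (rule mon_reduction_step)
    from less(1)[OF smaller] have "(mon i' j' k' l' :: 'k mpoly) - normal_mon a (mon_deg a i' j' k' l')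
        \<in> radical 4 (gen_ideal 4 (generators a))" .
    from radical_add[OF step this] show ?thesis
      by (simp add: deg)
  qed
qed

end

section \<open>The toric ideal of (4, 6, a, a + 2)\<close>

lemma toric_ideal_subset_radical:
  assumes "odd a" "5 \<le> a"
  shows "toric_ideal 4 (weights a) \<subseteq> radical 4 (gen_ideal 4 (generators a))"
proof
  fix p :: "'k::comm_ring_1 mpoly"
  assume p: "p \<in> toric_ideal 4 (weights a)"
  have "\<exists>d. a = 2 * d + 5"
    using assms by presburger
  then obtain d where a_eq: "a = 2 * d + 5" ..
  let ?R = "radical 4 (gen_ideal 4 (generators a)) :: 'k mpoly set"
  let ?c = "\<lambda>m. Poly_Mapping.single 0 (Poly_Mapping.lookup p m) :: 'k mpoly"
  let ?nf = "\<lambda>m. normal_mon a (wdeg (weights a) m) :: 'k mpoly"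
  have "p = (\<Sum>m\<in>Poly_Mapping.keys p. ?c m * Poly_Mapping.single m 1)
      - (\<Sum>m\<in>Poly_Mapping.keys p. ?c m * ?nf m)"
    using p by (simp add: toric_ideal_def toric_kernel_sum_eq_zero mult_single sum_single_lookup)
  also have "\<dots> = (\<Sum>m\<in>Poly_Mapping.keys p. ?c m * (Poly_Mapping.single m 1 - ?nf m))"
    by (simp add: sum_subtractf right_diff_distrib)
  also have "\<dots> \<in> ?R"
  proof (intro radical_sum radical_mult polyring_single)
    fix m assume "m \<in> Poly_Mapping.keys p"
    then have keys: "Poly_Mapping.keys m \<subseteq> {1..4}"
      using p by (auto simp: toric_ideal_def polyring_def)
    show "Poly_Mapping.single m 1 - ?nf m \<in> ?R"
      unfolding single_eq_mon[OF keys] wdeg_weights[OF keys] by (rule mon_congruent_normal_mon[OF a_eq])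
  qed simp
  finally show "p \<in> ?R" .
qed

lemma generators_subset_toric_ideal:
  assumes "odd a"
  shows "generators a \<subseteq> toric_ideal 4 (weights a)"
proof -
  have "4 * ((a + 1) div 2) = a + (a + 2)"
    using assms by presburger
  then show ?thesis
    by (simp add: toric_ideal_def toric_map_diff toric_map_mult toric_map_power toric_map_Var
        monom_power mult_monom)
qed

theorem mainTheorem8:
  fixes a :: nat
  assumes "odd a" and "a \<ge> 7"
  shows "(toric_ideal 4 (\<lambda>i. if i = 1 then 4 else if i = 2 then 6 else if i = 3 then a else a + 2)
           :: 'k::field mpoly set)
       = radical 4 (gen_ideal 4
           {Var 1 ^ ((a + 1) div 2) - Var 3 * Var 4,
            Var 1 ^ 3 - Var 2 ^ 2,
            Var 3 ^ (a + 2) - Var 4 ^ a,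
            Var 1 * Var 4 - Var 2 * Var 3})"
proof
  show "toric_ideal 4 (weights a) \<subseteq> radical 4 (gen_ideal 4 (generators a))"
    using assms by (intro toric_ideal_subset_radical) simp_all
  show "radical 4 (gen_ideal 4 (generators a)) \<subseteq> (toric_ideal 4 (weights a) :: 'k mpoly set)"
    using assms by (intro radical_gen_ideal_subset_toric_ideal generators_subset_toric_ideal)
qed

end
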